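(* Let $\mathcal{K}$ be a set of finite subsets of $\mathcal{G}$ satisfying (K$_{\supseteq}^{\mathrm{fin}}$) and (K$_{\mathrm{AddPair}}$). Then $\mathcal{K}$ satisfies (K$_{\mathrm{Add}}$): if $A_1,\ldots,A_n\in\mathcal{K}$ and for each $\langle g_1,\ldots,g_n\rangle\in A_1\times\cdots\times A_n$, $f_{\langle g_1,\ldots,g_n\rangle}$ is some member of $\mathrm{posi}(\{g_1,\ldots,g_n\})$, then $\{f_{\langle g_1,\ldots,g_n\rangle}:\langle g_1,\ldots,g_n\rangle\in A_1\times\cdots\times A_n\}\in\mathcal{K}$.
   Context: $\Omega$ is a non-empty set and $\mathcal{G}$ is the set of bounded functions $\Omega\to\mathbb{R}$. $\mathrm{posi}(B)=\{\sum_{i=1}^m\lambda_i h_i: m\geq1,\lambda_i>0,h_i\in B\}$. Here all gamble sets are finite. (K$_{\supseteq}^{\mathrm{fin}}$): if $A\in\mathcal{K}$ and $B\supseteq A$ is a finite subset of $\mathcal{G}$, then $B\in\mathcal{K}$. (K$_{\mathrm{AddPair}}$): if $A_1,A_2\in\mathcal{K}$ and for each pair $g_1\in A_1,g_2\in A_2$, $f_{\langle g_1,g_2\rangle}$ is some member of $\mathrm{posi}(\{g_1,g_2\})$, then $\{f_{\langle g_1,g_2\rangle}: g_1\in A_1,g_2\in A_2\}\in\mathcal{K}$. *)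

theory Defs
  imports Complex_Main
begin

text \<open>Omega is modelled by a type variable 'w (types are nonempty).
  Gambles: bounded real-valued functions on 'w.\<close>

definition gambles :: "('w \<Rightarrow> real) set" where
  "gambles = {f. \<exists>B. \<forall>w. \<bar>f w\<bar> \<le> B}"

definition posi :: "('w \<Rightarrow> real) set \<Rightarrow> ('w \<Rightarrow> real) set" where
  "posi B = {(\<lambda>w. \<Sum>i<m. lam i * h i w) | (m::nat) lam h.
      m \<ge> 1 \<and> (\<forall>i<m. lam i > 0 \<and> h i \<in> B)}"

definition finite_gamble_sets :: "('w \<Rightarrow> real) set set \<Rightarrow> bool" where
  "finite_gamble_sets K \<longleftrightarrow> (\<forall>A\<in>K. finite A \<and> A \<subseteq> gambles)"

definition K_supset_fin :: "('w \<Rightarrow> real) set set \<Rightarrow> bool" where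
  "K_supset_fin K \<longleftrightarrow>
     (\<forall>A\<in>K. \<forall>B. finite B \<and> B \<subseteq> gambles \<and> A \<subseteq> B \<longrightarrow> B \<in> K)"

definition K_AddPair :: "('w \<Rightarrow> real) set set \<Rightarrow> bool" where
  "K_AddPair K \<longleftrightarrow>
     (\<forall>A1\<in>K. \<forall>A2\<in>K. \<forall>f.
        (\<forall>g1\<in>A1. \<forall>g2\<in>A2. f g1 g2 \<in> posi {g1, g2}) \<longrightarrow>
        {f g1 g2 | g1 g2. g1 \<in> A1 \<and> g2 \<in> A2} \<in> K)"

text \<open>K_Add: for any list As = [A_1,...,A_n] of members of K and any choice function f on
  tuples (lists gs with gs!i in A_i) with f gs in posi(set gs), the image set lies in K.\<close>
definition K_Add :: "('w \<Rightarrow> real) set set \<Rightarrow> bool" where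
  "K_Add K \<longleftrightarrow>
     (\<forall>As f. As \<noteq> [] \<and> (\<forall>A\<in>set As. A \<in> K) \<and>
        (\<forall>gs\<in>listset As. f gs \<in> posi (set gs)) \<longrightarrow>
        f ` listset As \<in> K)"

end

theory Submission imports Defs begin

text \<open>Writing a tuple as a # gs, the combination
  f (a # gs) \<in> posi (insert a (set gs)) splits as an element of posi {a, d} with
  d \<in> posi (set gs); by induction the set of these d (for fixed a) lies in K. One application of
  K_AddPair, pairing a with this set and every other element of the current set with itself,
  then replaces a by all the f (a # gs). Doing this for each a \<in> A_1 in turn, growing sets
  by K_supset_fin where needed, turns A_1 into the image set of f.\<close>

lemma mem_posi_iff:
  "x \<in> posi B \<longleftrightarrow>
     (\<exists>(m::nat) lam h. x = (\<lambda>w. \<Sum>i<m. lam i * h i w) \<and> m \<ge> 1 \<and> (\<forall>i<m. lam i > 0 \<and> h i \<in> B))"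
  unfolding posi_def by blast

lemma in_posiI: "x \<in> B \<Longrightarrow> x \<in> posi B"
  unfolding mem_posi_iff
  by (intro exI[of _ 1] exI[of _ "\<lambda>_. 1"] exI[of _ "\<lambda>_. x"]) auto

lemma posi_mono: "B \<subseteq> C \<Longrightarrow> posi B \<subseteq> posi C"
  unfolding posi_def by blast

lemma posi_subset_gambles:
  assumes "B \<subseteq> gambles"
  shows "posi B \<subseteq> gambles"
proof
  fix x assume "x \<in> posi B"
  then obtain m :: nat and lam h where x: "x = (\<lambda>w. \<Sum>i<m. lam i * h i w)"
    and h: "\<forall>i<m. lam i > 0 \<and> h i \<in> B"
    unfolding mem_posi_iff by blast
  have "\<forall>i<m. \<exists>b. \<forall>w. \<bar>h i w\<bar> \<le> b" using h assms unfolding gambles_def by blast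
  then obtain bd where bd: "\<forall>i<m. \<forall>w. \<bar>h i w\<bar> \<le> bd i" by metis
  have "\<bar>x w\<bar> \<le> (\<Sum>i<m. lam i * bd i)" for w
  proof -
    have "\<bar>x w\<bar> \<le> (\<Sum>i<m. \<bar>lam i * h i w\<bar>)" unfolding x by (rule sum_abs)
    also have "\<dots> \<le> (\<Sum>i<m. lam i * bd i)"
    proof (rule sum_mono)
      fix i assume "i \<in> {..<m}"
      then have "lam i > 0" "\<bar>h i w\<bar> \<le> bd i" using h bd by auto
      then show "\<bar>lam i * h i w\<bar> \<le> lam i * bd i" by (simp add: abs_mult)
    qed
    finally show ?thesis .
  qed
  then show "x \<in> gambles" unfolding gambles_def by blast
qed

lemma sum_in_posi:
  fixes c :: "'i \<Rightarrow> real"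
  assumes "finite J" "J \<noteq> {}" "\<forall>j\<in>J. c j > 0 \<and> g j \<in> B"
  shows "(\<lambda>w. \<Sum>j\<in>J. c j * g j w) \<in> posi B"
proof -
  obtain e where e: "bij_betw e {..<card J} J"
    using ex_bij_betw_nat_finite assms(1) by (metis atLeast0LessThan)
  have reindex: "(\<Sum>j\<in>J. c j * g j w) = (\<Sum>i<card J. c (e i) * g (e i) w)" for w
    using sum.reindex_bij_betw[OF e, of "\<lambda>j. c j * g j w"] by simp
  have "card J \<ge> 1" using assms(1,2) by (simp add: Suc_leI card_gt_0_iff)
  moreover have "\<forall>i<card J. c (e i) > 0 \<and> g (e i) \<in> B"
    using assms(3) e by (auto simp: bij_betw_def)
  ultimately show ?thesis unfolding mem_posi_iff reindex
    by (intro exI[of _ "card J"] exI[of _ "\<lambda>i. c (e i)"] exI[of _ "\<lambda>i. g (e i)"]) simp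
qed

lemma posi_insert_split:
  assumes t: "t \<in> posi (insert a B)" and "B \<noteq> {}"
  shows "\<exists>d\<in>posi B. t \<in> posi {a, d}"
proof -
  obtain m :: nat and lam h where t_eq: "t = (\<lambda>w. \<Sum>i<m. lam i * h i w)" and m: "m \<ge> 1"
    and h: "\<forall>i<m. lam i > 0 \<and> h i \<in> insert a B"
    using t unfolding mem_posi_iff by blast
  define I where "I = {i\<in>{..<m}. h i = a}"
  define J where "J = {i\<in>{..<m}. h i \<noteq> a}"
  have fin: "finite I" "finite J" unfolding I_def J_def by auto
  consider "J = {}" | "I = {}" | "I \<noteq> {}" "J \<noteq> {}" by blast
  then show ?thesis
  proof cases
    case 1
    obtain b where b: "b \<in> B" using \<open>B \<noteq> {}\<close> by blast
    have "\<forall>i<m. lam i > 0 \<and> h i \<in> {a, b}" using h 1 unfolding J_def by auto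
    then have "t \<in> posi {a, b}" unfolding mem_posi_iff using t_eq m by blast
    with b show ?thesis by (blast intro: in_posiI)
  next
    case 2
    have "\<forall>i<m. lam i > 0 \<and> h i \<in> B" using h 2 unfolding I_def by auto
    then have "t \<in> posi B" unfolding mem_posi_iff using t_eq m by blast
    moreover have "t \<in> posi {a, t}" by (simp add: in_posiI)
    ultimately show ?thesis by blast
  next
    case 3
    define d where "d = (\<lambda>w. \<Sum>i\<in>J. lam i * h i w)"
    define mu where "mu = (\<Sum>i\<in>I. lam i)"
    have d: "d \<in> posi B" unfolding d_def
      using h by (intro sum_in_posi[OF fin(2) 3(2)]) (auto simp: J_def)
    have mu: "mu > 0" unfolding mu_def
      using h by (intro sum_pos[OF fin(1) 3(1)]) (auto simp: I_def)
    have "t w = mu * a w + 1 * d w" for w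
    proof -
      have "{..<m} = I \<union> J" "I \<inter> J = {}" unfolding I_def J_def by auto
      then have "t w = (\<Sum>i\<in>I. lam i * h i w) + d w"
        unfolding t_eq d_def using sum.union_disjoint[OF fin] by simp
      moreover have "(\<Sum>i\<in>I. lam i * h i w) = mu * a w"
        unfolding mu_def sum_distrib_right by (rule sum.cong) (auto simp: I_def)
      ultimately show ?thesis by simp
    qed
    then have "t \<in> posi {a, d}"
      unfolding mem_posi_iff using mu
      by (intro exI[of _ 2] exI[of _ "\<lambda>i. if i = 0 then mu else 1"]
          exI[of _ "\<lambda>i. if i = 0 then a else d"]) (auto simp: numeral_2_eq_2)
    with d show ?thesis by blast
  qed
qed

lemma listset_Cons_eq_image: "listset (A # As) = (\<lambda>(x, xs). x # xs) ` (A \<times> listset As)"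
  by (auto simp: set_Cons_def)

lemma finite_listset: "\<forall>A\<in>set As. finite A \<Longrightarrow> finite (listset As)"
  by (induction As) (simp_all add: listset_Cons_eq_image del: listset.simps(2))

lemma listset_eq_empty_iff: "listset As = {} \<longleftrightarrow> {} \<in> set As"
  by (induction As) (auto simp: set_Cons_def)

lemma length_listset: "gs \<in> listset As \<Longrightarrow> length gs = length As"
  by (induction As arbitrary: gs) (auto simp: set_Cons_def)

lemma set_listset_subset: "gs \<in> listset As \<Longrightarrow> set gs \<subseteq> \<Union>(set As)"
  by (induction As arbitrary: gs) (auto simp: set_Cons_def, blast)

lemma K_replace_element:
  assumes fg: "finite_gamble_sets K" and sup: "K_supset_fin K" and pair: "K_AddPair K"
    and Va: "insert a V \<in> K" and T: "finite T" "T \<subseteq> gambles"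
    and D: "D \<in> K" "D \<noteq> {}" and DT: "\<forall>d\<in>D. \<exists>t\<in>T. t \<in> posi {a, d}"
  shows "V \<union> T \<in> K"
proof -
  have superset_in_K: "B \<in> K" if "finite B" "B \<subseteq> gambles" "insert a V \<subseteq> B" for B
    using sup Va that unfolding K_supset_fin_def by blast
  have Va_fin: "finite (insert a V)" "insert a V \<subseteq> gambles"
    using fg Va unfolding finite_gamble_sets_def by auto
  show ?thesis
  proof (cases "a \<in> V \<union> T")
    case True
    then show ?thesis using Va_fin T by (intro superset_in_K) auto
  next
    case False
    define X where "X = insert a (V \<union> T)"
    have X: "X \<in> K" unfolding X_def using Va_fin T by (intro superset_in_K) auto
    obtain tau where tau: "\<forall>d\<in>D. tau d \<in> T \<and> tau d \<in> posi {a, d}"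
      using DT by metis
    define F where "F z d = (if z = a then tau d else z)" for z d
    have "\<forall>z\<in>X. \<forall>d\<in>D. F z d \<in> posi {z, d}"
      using tau by (auto simp: F_def intro: in_posiI)
    then have "{F z d | z d. z \<in> X \<and> d \<in> D} \<in> K"
      using pair X D(1) unfolding K_AddPair_def by blast
    moreover have "{F z d | z d. z \<in> X \<and> d \<in> D} = V \<union> T"
    proof
      show "{F z d | z d. z \<in> X \<and> d \<in> D} \<subseteq> V \<union> T"
        using tau by (auto simp: F_def X_def)
      obtain d0 where "d0 \<in> D" using D(2) by blast
      with False show "V \<union> T \<subseteq> {F z d | z d. z \<in> X \<and> d \<in> D}"
        unfolding F_def X_def by force
    qed
    ultimately show ?thesis by simp
  qed
qed

lemma K_replace_elements:
  assumes fg: "finite_gamble_sets K" and sup: "K_supset_fin K" and pair: "K_AddPair K"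
    and A: "A \<in> K"
    and T: "\<And>a. a \<in> A \<Longrightarrow> finite (T a) \<and> T a \<subseteq> gambles"
    and D: "\<And>a. a \<in> A \<Longrightarrow> \<exists>D\<in>K. D \<noteq> {} \<and> (\<forall>d\<in>D. \<exists>t\<in>T a. t \<in> posi {a, d})"
  shows "\<Union>(T ` A) \<in> K"
proof -
  have "Y \<subseteq> A \<longrightarrow> (A - Y) \<union> \<Union>(T ` Y) \<in> K" if "finite Y" for Y
    using that
  proof (induction Y rule: finite_induct)
    case empty
    then show ?case using A by simp
  next
    case (insert a Y)
    show ?case
    proof
      assume sub: "insert a Y \<subseteq> A"
      define V where "V = (A - insert a Y) \<union> \<Union>(T ` Y)"
      have "insert a V = (A - Y) \<union> \<Union>(T ` Y)" unfolding V_def using sub insert.hyps(2) by auto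
      then have "insert a V \<in> K" using insert.IH sub by simp
      with D[of a] T[of a] sub have "V \<union> T a \<in> K"
        by (metis K_replace_element[OF fg sup pair] insert_subset)
      moreover have "V \<union> T a = (A - insert a Y) \<union> \<Union>(T ` insert a Y)" unfolding V_def by auto
      ultimately show "(A - insert a Y) \<union> \<Union>(T ` insert a Y) \<in> K" by simp
    qed
  qed
  moreover have "finite A" using fg A unfolding finite_gamble_sets_def by blast
  ultimately have "(A - A) \<union> \<Union>(T ` A) \<in> K" by blast
  then show ?thesis by simp
qed

lemma K_Add_image_in_K:
  assumes fg: "finite_gamble_sets K" and sup: "K_supset_fin K" and pair: "K_AddPair K"
  shows "As \<noteq> [] \<Longrightarrow> \<forall>A\<in>set As. A \<in> K \<Longrightarrow> \<forall>gs\<in>listset As. f gs \<in> posi (set gs) \<Longrightarrow>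
    f ` listset As \<in> K"
proof (induction As arbitrary: f)
  case Nil
  then show ?case by simp
next
  case (Cons A As)
  show ?case
  proof (cases "listset (A # As) = {}")
    case True
    then show ?thesis using Cons.prems(2) listset_eq_empty_iff[of "A # As"] by (metis image_empty)
  next
    case nonempty: False
    have A: "A \<in> K" using Cons.prems(2) by simp
    have f: "f (a # gs) \<in> posi (insert a (set gs))" if "a \<in> A" "gs \<in> listset As" for a gs
    proof -
      have "a # gs \<in> listset (A # As)" using that by (simp add: set_Cons_def)
      with Cons.prems(3) have "f (a # gs) \<in> posi (set (a # gs))" by blast
      then show ?thesis by simp
    qed
    define T where "T a = (\<lambda>gs. f (a # gs)) ` listset As" for a
    have image_eq: "f ` listset (A # As) = \<Union>(T ` A)"
      unfolding T_def listset_Cons_eq_image by force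
    have image_gambles: "f ` listset (A # As) \<subseteq> gambles"
    proof
      fix t assume "t \<in> f ` listset (A # As)"
      then obtain gs where gs: "gs \<in> listset (A # As)" "t = f gs" by blast
      have "set gs \<subseteq> gambles"
        using set_listset_subset[OF gs(1)] Cons.prems(2) fg unfolding finite_gamble_sets_def by auto
      then show "t \<in> gambles" using gs Cons.prems(3) posi_subset_gambles by blast
    qed
    have "\<Union>(T ` A) \<in> K"
    proof (rule K_replace_elements[OF fg sup pair A])
      fix a assume a: "a \<in> A"
      have "finite (listset As)"
        using Cons.prems(2) fg unfolding finite_gamble_sets_def by (simp add: finite_listset)
      moreover have "T a \<subseteq> gambles" using image_gambles image_eq a by blast
      ultimately show "finite (T a) \<and> T a \<subseteq> gambles" unfolding T_def by blast
      show "\<exists>D\<in>K. D \<noteq> {} \<and> (\<forall>d\<in>D. \<exists>t\<in>T a. t \<in> posi {a, d})"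
      proof (cases "As = []")
        case True
        have "f [a] \<in> posi {a, d}" for d
          using f[OF a, of "[]"] True posi_mono[of "{a}" "{a, d}"] by auto
        then show ?thesis using A a True unfolding T_def by auto
      next
        case False
        have "\<exists>d\<in>posi (set gs). f (a # gs) \<in> posi {a, d}" if gs: "gs \<in> listset As" for gs
        proof (rule posi_insert_split[OF f[OF a gs]])
          show "set gs \<noteq> {}" using length_listset[OF gs] False by auto
        qed
        then obtain dd where dd: "\<forall>gs\<in>listset As. dd gs \<in> posi (set gs) \<and> f (a # gs) \<in> posi {a, dd gs}"
          by metis
        show ?thesis
        proof (intro bexI conjI)
          show "dd ` listset As \<in> K"
            using Cons.IH[OF False] Cons.prems(2) dd by simp
          show "dd ` listset As \<noteq> {}"
            using nonempty by (auto simp: set_Cons_def)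
          show "\<forall>d\<in>dd ` listset As. \<exists>t\<in>T a. t \<in> posi {a, d}"
            using dd unfolding T_def by auto
        qed
      qed
    qed
    with image_eq show ?thesis by simp
  qed
qed

theorem mainTheorem5:
  fixes K :: "('w \<Rightarrow> real) set set"
  assumes "finite_gamble_sets K"
    and "K_supset_fin K"
    and "K_AddPair K"
  shows "K_Add K"
  unfolding K_Add_def using K_Add_image_in_K[OF assms] by blast

end
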